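(* Let $M,N,K$ be symmetric homogeneous bi-variate means having symmetric asymptotic expansions with coefficients $(a^M_n)$, $(a^N_n)$, $(a^K_n)$. Suppose $K$ and $N$ are stable and $M$ is $(K,N)$-stabilized, i.e. $M(s,t)=K\big(N(s,M(s,t)),N(M(s,t),t)\big)$ for all $s,t>0$. Then $a^M_0=1$ and for $m\ge1$ $$a^M_m=\sum_{n=1}^ma^N_n\sum_{k=0}^{2m-2n}P[k,2n,\mathbf g^M]P[2m-2n-k,-2n+1,\mathbf h^M]+2\sum_{n=1}^ma^K_n\sum_{k=0}^{m-n}P[k,2n,\mathbf d]P[m-n-k,-2n+1,\mathbf s],$$ with $\mathbf d,\mathbf s$ defined by $d_m=-\frac12\sum_{n=0}^ma^N_n\sum_{k=0}^{2m+1-2n}P[k,2n,\mathbf g^M]P[2m+1-2n-k,-2n+1,\mathbf h^M]$ and $s_m=\frac12\sum_{n=0}^ma^N_n\sum_{k=0}^{2m-2n}P[k,2n,\mathbf g^M]P[2m-2n-k,-2n+1,\mathbf h^M]$. In particular $a^M_1=\frac12(a^K_1+a^N_1)$.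
   Context: A bi-variate mean is $M:(0,\infty)^2\to(0,\infty)$ with $\min(s,t)\le M(s,t)\le\max(s,t)$; symmetric and homogeneous (degree 1) as usual. $M$ is stable if $M(s,t)=M\big(M(s,M(s,t)),M(M(s,t),t)\big)$. For two nontrivial stable means $K,N$, a mean $M$ is $(K,N)$-stabilized if $M(s,t)=K\big(N(s,M(s,t)),N(M(s,t),t)\big)$ for all $s,t>0$. A mean has a symmetric asymptotic expansion with coefficients $(a_n)$ if for every fixed real $t$ and $N\ge0$, $M(x-t,x+t)=\sum_{n=0}^Na_nt^{2n}x^{-2n+1}+o(x^{-2N+1})$ as $x\to\infty$. For a sequence $\mathbf b$ with $b_0\ne0$, $r\in\mathbb R$: $P[0,r,\mathbf b]=b_0^r$, $P[n,r,\mathbf b]=\frac1{nb_0}\sum_{k=1}^n(k(1+r)-n)b_kP[n-k,r,\mathbf b]$ ($n\ge1$), i.e. the coefficient of $z^n$ in $(\sum_jb_jz^j)^r$. $\mathbf g^M=(1,a^M_1,0,a^M_2,0,\ldots)$ ($g_0=1$, $g_{2k-1}=a^M_k$, $g_{2k}=0$), $\mathbf h^M=(2,-1,a^M_1,0,a^M_2,0,\ldots)$ ($h_0=2$, $h_1=-1$, $h_{2k}=a^M_k$, $h_{2k+1}=0$), $k\ge1$. *)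

theory Defs
  imports "HOL-Analysis.Analysis" "HOL-Library.Landau_Symbols"
begin

text \<open>Bivariate means are functions real => real => real; only their values on
  (0,inf)^2 matter.\<close>

definition is_mean :: "(real \<Rightarrow> real \<Rightarrow> real) \<Rightarrow> bool" where
  "is_mean M \<longleftrightarrow> (\<forall>s>0. \<forall>t>0. min s t \<le> M s t \<and> M s t \<le> max s t)"

definition symmetric_mean :: "(real \<Rightarrow> real \<Rightarrow> real) \<Rightarrow> bool" where
  "symmetric_mean M \<longleftrightarrow> (\<forall>s>0. \<forall>t>0. M s t = M t s)"

definition homogeneous_mean :: "(real \<Rightarrow> real \<Rightarrow> real) \<Rightarrow> bool" where
  "homogeneous_mean M \<longleftrightarrow> (\<forall>l>0. \<forall>s>0. \<forall>t>0. M (l * s) (l * t) = l * M s t)"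

definition nontrivial_mean :: "(real \<Rightarrow> real \<Rightarrow> real) \<Rightarrow> bool" where
  "nontrivial_mean M \<longleftrightarrow> \<not> (\<forall>s>0. \<forall>t>0. M s t = s) \<and> \<not> (\<forall>s>0. \<forall>t>0. M s t = t)"

definition stable_mean :: "(real \<Rightarrow> real \<Rightarrow> real) \<Rightarrow> bool" where
  "stable_mean M \<longleftrightarrow> (\<forall>s>0. \<forall>t>0. M s t = M (M s (M s t)) (M (M s t) t))"

definition stabilized :: "(real \<Rightarrow> real \<Rightarrow> real) \<Rightarrow> (real \<Rightarrow> real \<Rightarrow> real) \<Rightarrow>
    (real \<Rightarrow> real \<Rightarrow> real) \<Rightarrow> bool" where
  "stabilized K N M \<longleftrightarrow>
     is_mean K \<and> is_mean N \<and> nontrivial_mean K \<and> nontrivial_mean N \<and>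
     stable_mean K \<and> stable_mean N \<and>
     (\<forall>s>0. \<forall>t>0. M s t = K (N s (M s t)) (N (M s t) t))"

definition has_sym_expansion :: "(real \<Rightarrow> real \<Rightarrow> real) \<Rightarrow> (nat \<Rightarrow> real) \<Rightarrow> bool" where
  "has_sym_expansion M a \<longleftrightarrow>
     (\<forall>t::real. \<forall>N::nat.
        (\<lambda>x. M (x - t) (x + t) - (\<Sum>n\<le>N. a n * t ^ (2 * n) * x powi (1 - 2 * int n)))
          \<in> o[at_top](\<lambda>x. x powi (1 - 2 * int N)))"

text \<open>P[n,r,b]: coefficient of z^n in (sum_j b_j z^j)^r, via the recursion.\<close>
fun P :: "nat \<Rightarrow> real \<Rightarrow> (nat \<Rightarrow> real) \<Rightarrow> real" where
  "P 0 r b = b 0 powr r"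
| "P (Suc m) r b =
     (1 / (real (Suc m) * b 0)) *
       (\<Sum>k\<in>{1..Suc m}. (real k * (1 + r) - real (Suc m)) * b k * P (Suc m - k) r b)"

definition gseq :: "(nat \<Rightarrow> real) \<Rightarrow> nat \<Rightarrow> real" where
  "gseq a k = (if k = 0 then 1 else if odd k then a ((k + 1) div 2) else 0)"

definition hseq :: "(nat \<Rightarrow> real) \<Rightarrow> nat \<Rightarrow> real" where
  "hseq a k = (if k = 0 then 2 else if k = 1 then -1 else if even k then a (k div 2) else 0)"

definition dseq :: "(nat \<Rightarrow> real) \<Rightarrow> (nat \<Rightarrow> real) \<Rightarrow> nat \<Rightarrow> real" where
  "dseq aM aN m = - (1/2) * (\<Sum>n=0..m. aN n *
      (\<Sum>k=0..2*m+1-2*n. P k (2 * real n) (gseq aM) *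
                          P (2*m+1-2*n-k) (1 - 2 * real n) (hseq aM)))"

definition sseq :: "(nat \<Rightarrow> real) \<Rightarrow> (nat \<Rightarrow> real) \<Rightarrow> nat \<Rightarrow> real" where
  "sseq aM aN m = (1/2) * (\<Sum>n=0..m. aN n *
      (\<Sum>k=0..2*m-2*n. P k (2 * real n) (gseq aM) *
                        P (2*m-2*n-k) (1 - 2 * real n) (hseq aM)))"

end

theory Submission
  imports Defs "HOL-Computational_Algebra.Polynomial_FPS"
begin

text \<open>Substituting \<open>x = 1/v\<close>, the symmetric expansion of a homogeneous mean becomes
  \<open>N(1 - v, 1 + v) = \<Sum>\<^sub>k a\<^sub>k v\<^sup>2\<^sup>k + o(v\<^sup>2\<^sup>n)\<close> as \<open>v \<rightarrow> 0\<^sup>+\<close>, and homogeneity then expands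
  \<open>N(c - h, c + h)\<close> as \<open>\<Sum>\<^sub>k a\<^sub>k h\<^sup>2\<^sup>k c\<^sup>1\<^sup>-\<^sup>2\<^sup>k\<close> whenever \<open>c \<rightarrow> 1\<close> and \<open>h = O(v)\<close>.
  Such expansions compose like formal power series truncated at order \<open>2m\<close>, and their
  coefficients are unique. Expanding both sides of \<open>M(1 - v, 1 + v) = K(A(v), B(v))\<close>, where
  \<open>A(v) = N(1 - v, M(1 - v, 1 + v))\<close> and the expansion of \<open>B(v) = N(M(1 - v, 1 + v), 1 + v)\<close>
  is that of \<open>A\<close> at \<open>-v\<close>, and comparing the coefficients of \<open>v\<^sup>2\<^sup>m\<close> gives \<open>a\<^sup>M\<^sub>m\<close> as a sum
  whose \<open>k = 0\<close> term \<open>s\<^sub>m\<close> contains \<open>a\<^sup>M\<^sub>m/2\<close>; solving for \<open>a\<^sup>M\<^sub>m\<close> yields the formula. The numbers \<open>P[n, r, b]\<close> enter as the coefficients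
  of \<open>b(z)\<^sup>r\<close> for \<open>r = 2k\<close> and \<open>r = 1 - 2k\<close>.\<close>

unbundle no vec_syntax
notation fps_nth (infixl \<open>$\<close> 75)

lemma fps_deriv_eq_coeff_recurrence:
  fixes b :: "nat \<Rightarrow> real" and F :: "real fps"
  assumes deriv: "Abs_fps b * fps_deriv F = fps_const r * fps_deriv (Abs_fps b) * F"
    and n: "n \<ge> 1"
  shows "real n * b 0 * F $ n = (\<Sum>k=1..n. (real k * (1 + r) - real n) * b k * F $ (n - k))"
proof -
  obtain m where m: "n = Suc m" using n by (cases n) auto
  have "(Abs_fps b * fps_deriv F) $ m = (\<Sum>i=0..m. b i * (real (m - i + 1) * F $ (m - i + 1)))"
    by (simp add: fps_mult_nth)
  also have "\<dots> = b 0 * real n * F $ n + (\<Sum>k=1..n. b k * real (n - k) * F $ (n - k))"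
    by (simp add: m sum.atLeast_Suc_atMost Suc_diff_le mult.assoc)
       (auto intro!: sum.cong simp: algebra_simps)
  finally have lhs: "(Abs_fps b * fps_deriv F) $ m = \<dots>" .
  have "(fps_const r * fps_deriv (Abs_fps b) * F) $ m = (\<Sum>i=0..m. r * (real (i + 1) * b (i + 1)) * F $ (m - i))"
    unfolding mult.assoc fps_mult_left_const_nth by (simp add: fps_mult_nth sum_distrib_left mult.assoc)
  also have "\<dots> = (\<Sum>k=Suc 0..Suc m. r * real k * b k * F $ (Suc m - k))"
    by (subst sum.shift_bounds_cl_Suc_ivl) (simp add: mult.assoc)
  finally have rhs: "(fps_const r * fps_deriv (Abs_fps b) * F) $ m
      = (\<Sum>k=1..n. r * real k * b k * F $ (n - k))" by (simp add: m)
  have "real n * b 0 * F $ n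
      = (\<Sum>k=1..n. r * real k * b k * F $ (n - k)) - (\<Sum>k=1..n. b k * real (n - k) * F $ (n - k))"
    using deriv lhs rhs by (simp add: fps_eq_iff)
  also have "\<dots> = (\<Sum>k=1..n. (real k * (1 + r) - real n) * b k * F $ (n - k))"
    unfolding sum_subtractf[symmetric] by (rule sum.cong) (auto simp: of_nat_diff algebra_simps)
  finally show ?thesis .
qed

text \<open>The recursion defining \<open>P\<close> is coefficient comparison in \<open>B F' = r B' F\<close>,
  the differential equation satisfied by \<open>F = B\<^sup>r\<close>.\<close>
lemma P_eq_fps_nth:
  fixes b :: "nat \<Rightarrow> real" and F :: "real fps"
  assumes b0: "b 0 \<noteq> 0" and F0: "F $ 0 = b 0 powr r"
    and deriv: "Abs_fps b * fps_deriv F = fps_const r * fps_deriv (Abs_fps b) * F"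
  shows "P n r b = F $ n"
proof (induction n rule: less_induct)
  case (less n)
  show ?case
  proof (cases n)
    case 0
    then show ?thesis using F0 by simp
  next
    case (Suc m)
    have rec: "real n * b 0 * F $ n = (\<Sum>k=1..n. (real k * (1 + r) - real n) * b k * F $ (n - k))"
      by (rule fps_deriv_eq_coeff_recurrence[OF deriv]) (simp add: Suc)
    have "P n r b = (\<Sum>k=1..n. (real k * (1 + r) - real n) * b k * F $ (n - k)) / (real n * b 0)"
      unfolding Suc P.simps unfolding Suc[symmetric] using less Suc by (auto intro!: sum.cong)
    also have "\<dots> = F $ n"
      unfolding rec[symmetric] using b0 Suc by simp
    finally show ?thesis .
  qed
qed

lemma P_of_nat_power:
  fixes b :: "nat \<Rightarrow> real"
  assumes "b 0 > 0"
  shows "P n (real k) b = (Abs_fps b ^ k) $ n"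
proof (rule P_eq_fps_nth)
  show "(Abs_fps b ^ k) $ 0 = b 0 powr real k"
    using assms by (simp add: fps_nth_power_0 powr_realpow)
  show "Abs_fps b * fps_deriv (Abs_fps b ^ k) = fps_const (real k) * fps_deriv (Abs_fps b) * Abs_fps b ^ k"
    unfolding fps_deriv_power by (cases k) (simp_all add: algebra_simps)
qed (use assms in simp)

lemma P_one_minus_of_nat_power:
  fixes b :: "nat \<Rightarrow> real"
  assumes b0: "b 0 > 0"
  shows "P n (1 - real k) b = (Abs_fps b * inverse (Abs_fps b) ^ k) $ n"
proof (rule P_eq_fps_nth)
  define B where "B = Abs_fps b"
  have B0: "B $ 0 \<noteq> 0" using b0 by (simp add: B_def)
  have deriv_inverse: "B * fps_deriv (inverse B) = - fps_deriv B * inverse B"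
    using fps_inverse_deriv[OF B0] inverse_mult_eq_1'[OF B0] by (simp add: power2_eq_square algebra_simps)
  have "B * fps_deriv (B * inverse B ^ k) = fps_const (1 - real k) * fps_deriv B * (B * inverse B ^ k)"
  proof (induction k)
    case 0
    then show ?case by (simp add: mult.commute)
  next
    case (Suc k)
    have "B * fps_deriv (B * inverse B ^ Suc k)
        = B * fps_deriv (B * inverse B ^ k) * inverse B + (B * inverse B ^ k) * (B * fps_deriv (inverse B))"
      by (simp add: fps_deriv_mult algebra_simps)
    also have "\<dots> = (fps_const (1 - real k) - 1) * fps_deriv B * (B * inverse B ^ Suc k)"
      unfolding Suc.IH deriv_inverse by (simp add: algebra_simps)
    also have "fps_const (1 - real k) - 1 = fps_const (1 - real (Suc k))"
      by (simp flip: fps_const_1_eq_1)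
    finally show ?case .
  qed
  then show "Abs_fps b * fps_deriv (Abs_fps b * inverse (Abs_fps b) ^ k)
      = fps_const (1 - real k) * fps_deriv (Abs_fps b) * (Abs_fps b * inverse (Abs_fps b) ^ k)"
    by (simp add: B_def)
  show "(Abs_fps b * inverse (Abs_fps b) ^ k) $ 0 = b 0 powr (1 - real k)"
    using b0 by (simp add: fps_nth_power_0 powr_diff powr_realpow power_inverse divide_inverse)
qed (use b0 in simp)

lemma P_convolution:
  fixes b c :: "nat \<Rightarrow> real"
  assumes "b 0 > 0" "c 0 > 0"
  shows "(Abs_fps b ^ (2 * k) * (Abs_fps c * inverse (Abs_fps c) ^ (2 * k))) $ n
      = (\<Sum>l=0..n. P l (2 * real k) b * P (n - l) (1 - 2 * real k) c)"
  unfolding fps_mult_nth[of "Abs_fps b ^ (2 * k)"]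
  using P_of_nat_power[of b, OF assms(1), of _ "2 * k"] P_one_minus_of_nat_power[of c, OF assms(2), of _ "2 * k"]
  by simp

lemma fps_compose_X_squared_nth [simp]:
  "(F oo fps_X ^ 2) $ n = (if even n then F $ (n div 2) else (0 :: 'a :: comm_ring_1))"
proof -
  have "(F oo fps_X ^ 2) $ n = (\<Sum>i=0..n. if n = 2 * i then F $ i else 0)"
    by (auto simp: fps_compose_nth power_mult[symmetric] mult.commute[of 2] intro!: sum.cong)
  then show ?thesis by (cases "even n") (auto elim!: evenE intro!: sum.neutral)
qed

lemma fps_compose_uminus_X_nth [simp]:
  "(F oo - fps_X) $ n = (-1) ^ n * (F $ n :: 'a :: comm_ring_1)"
  by (simp add: fps_compose_uminus')

lemma eventually_at_right_0_less:
  "e > 0 \<Longrightarrow> eventually (\<lambda>v::real. 0 < v \<and> v < e) (at_right 0)"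
  unfolding eventually_at_right_field by auto

lemma tendsto_imp_bigo_1: "(f \<longlongrightarrow> c) F \<Longrightarrow> (f :: 'a \<Rightarrow> real) \<in> O[F](\<lambda>_. 1)"
  by (rule bigoI_tendsto[where c = c]) auto

lemma power_smallo_power_at_right_0:
  assumes "J < k"
  shows "(\<lambda>v::real. v ^ k) \<in> o[at_right 0](\<lambda>v. v ^ J)"
proof -
  have "(\<lambda>v::real. v ^ (k - J)) \<in> o[at_right 0](\<lambda>_. 1)"
    using assms by (intro smalloI_tendsto) (auto intro!: tendsto_eq_intros)
  then have "(\<lambda>v::real. v ^ (k - J) * v ^ J) \<in> o[at_right 0](\<lambda>v. 1 * v ^ J)"
    by (rule landau_o.small_big_mult) simp
  then show ?thesis
    using assms by (simp flip: power_add)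
qed

lemma power_bigo_power_at_right_0:
  assumes "J \<le> k"
  shows "(\<lambda>v::real. v ^ k) \<in> O[at_right 0](\<lambda>v. v ^ J)"
proof (rule bigoI)
  show "eventually (\<lambda>v::real. norm (v ^ k) \<le> 1 * norm (v ^ J)) (at_right 0)"
    using eventually_at_right_0_less[OF zero_less_one]
    by eventually_elim (use assms in \<open>simp add: power_decreasing abs_of_pos\<close>)
qed

lemma poly_smallo_power_at_right_0:
  assumes "\<And>n. n \<le> J \<Longrightarrow> coeff p n = 0"
  shows "(\<lambda>v::real. poly p v) \<in> o[at_right 0](\<lambda>v. v ^ J)"
  unfolding poly_altdef
proof (rule big_sum_in_smallo)
  fix i
  show "(\<lambda>v. coeff p i * v ^ i) \<in> o[at_right 0](\<lambda>v. v ^ J)"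
    using assms[of i] power_smallo_power_at_right_0[of J i] by (cases "i \<le> J") auto
qed

lemma poly_smallo_power_at_right_0_iff:
  "(\<lambda>v::real. poly p v) \<in> o[at_right 0](\<lambda>v. v ^ J) \<longleftrightarrow> (\<forall>n\<le>J. coeff p n = 0)"
proof (intro iffI allI impI)
  fix n
  assume small: "(\<lambda>v. poly p v) \<in> o[at_right 0](\<lambda>v. v ^ J)" and "n \<le> J"
  from \<open>n \<le> J\<close> show "coeff p n = 0"
  proof (induction n rule: less_induct)
    case (less n)
    have "(\<lambda>v. poly (p - monom (coeff p n) n) v) \<in> o[at_right 0](\<lambda>v. v ^ n)"
      using less by (intro poly_smallo_power_at_right_0) (auto simp: coeff_monom)
    moreover have "(\<lambda>v. poly p v) \<in> o[at_right 0](\<lambda>v. v ^ n)"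
      using landau_o.small_big_trans[OF small power_bigo_power_at_right_0[OF less.prems]] .
    ultimately have "(\<lambda>v. poly p v - poly (p - monom (coeff p n) n) v) \<in> o[at_right 0](\<lambda>v. v ^ n)"
      by (intro sum_in_smallo)
    then have "(\<lambda>v. coeff p n * v ^ n) \<in> o[at_right 0](\<lambda>v. v ^ n)"
      by (simp add: poly_monom)
    moreover have "\<not> eventually (\<lambda>v::real. v ^ n = 0) (at_right 0)"
    proof
      assume "eventually (\<lambda>v::real. v ^ n = 0) (at_right 0)"
      with eventually_at_right_0_less[OF zero_less_one]
      have "eventually (\<lambda>v::real. False) (at_right 0)"
        by eventually_elim simp
      then show False
        by (simp add: trivial_limit_at_right_real)
    qed
    ultimately show ?case
      by (auto simp: landau_o.small_refl_iff)
  qed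
qed (rule poly_smallo_power_at_right_0, simp)

lemma poly_truncate_fps_Suc:
  fixes F :: "real fps"
  shows "poly (truncate_fps (Suc n) F) v = (\<Sum>j\<le>n. F $ j * v ^ j)"
proof -
  have "truncate_fps (Suc n) F = (\<Sum>j\<le>n. monom (F $ j) j)"
    by (rule poly_eqI) (simp add: coeff_sum coeff_truncate_fps)
  then show ?thesis by (simp add: poly_sum poly_monom)
qed

definition fps_approx :: "nat \<Rightarrow> (real \<Rightarrow> real) \<Rightarrow> real fps \<Rightarrow> bool" where
  "fps_approx n f F \<longleftrightarrow> (\<lambda>v. f v - poly (truncate_fps (Suc n) F) v) \<in> o[at_right 0](\<lambda>v. v ^ n)"

lemma fps_approx_cong:
  assumes "fps_approx n f F" "eventually (\<lambda>v. f v = g v) (at_right 0)"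
    and "\<And>j. j \<le> n \<Longrightarrow> F $ j = G $ j"
  shows "fps_approx n g G"
proof -
  have "truncate_fps (Suc n) F = truncate_fps (Suc n) G"
    using assms(3) by (intro poly_eqI) (simp add: coeff_truncate_fps)
  moreover have "eventually (\<lambda>v. f v - poly (truncate_fps (Suc n) F) v
      = g v - poly (truncate_fps (Suc n) F) v) (at_right 0)"
    using assms(2) by eventually_elim simp
  ultimately show ?thesis
    using assms(1) landau_o.small.in_cong unfolding fps_approx_def by fastforce
qed

lemma fps_approx_eqI:
  "fps_approx n f F \<Longrightarrow> (\<And>v. f v = g v) \<Longrightarrow> F = G \<Longrightarrow> fps_approx n g G"
  by (metis ext)

lemma fps_approx_smallo_diff:
  assumes "fps_approx n g F" "(\<lambda>v. f v - g v) \<in> o[at_right 0](\<lambda>v. v ^ n)"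
  shows "fps_approx n f F"
  using sum_in_smallo(1)[OF assms(2) assms(1)[unfolded fps_approx_def]]
  by (simp add: fps_approx_def)

lemma fps_approx_unique:
  assumes "fps_approx n f F" "fps_approx n f G" "j \<le> n"
  shows "F $ j = G $ j"
proof -
  have "(\<lambda>v. poly (truncate_fps (Suc n) G - truncate_fps (Suc n) F) v) \<in> o[at_right 0](\<lambda>v. v ^ n)"
    using sum_in_smallo(2)[OF assms(1,2)[unfolded fps_approx_def]] by simp
  then have "coeff (truncate_fps (Suc n) G - truncate_fps (Suc n) F) j = 0"
    using assms(3) by (simp only: poly_smallo_power_at_right_0_iff)
  then show ?thesis
    using assms(3) by (simp add: coeff_truncate_fps)
qed

lemma fps_approx_tendsto:
  assumes "fps_approx n f F"
  shows "(f \<longlongrightarrow> F $ 0) (at_right 0)"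
proof -
  have "(\<lambda>v. f v - poly (truncate_fps (Suc n) F) v) \<in> o[at_right 0](\<lambda>_. 1)"
    using assms landau_o.small_big_trans power_bigo_power_at_right_0[of 0 n]
    unfolding fps_approx_def by fastforce
  then have "((\<lambda>v. (f v - poly (truncate_fps (Suc n) F) v) + poly (truncate_fps (Suc n) F) v)
      \<longlongrightarrow> 0 + poly (truncate_fps (Suc n) F) 0) (at_right 0)"
    by (intro tendsto_add tendsto_poly tendsto_ident_at) (use smalloD_tendsto in fastforce)
  then show ?thesis
    by (simp add: poly_0_coeff_0)
qed

lemma fps_approx_bigo_1:
  "fps_approx n f F \<Longrightarrow> f \<in> O[at_right 0](\<lambda>_. 1)"
  by (rule tendsto_imp_bigo_1) (rule fps_approx_tendsto)

lemma truncate_fps_Suc_const: "truncate_fps (Suc n) (fps_const c) = [:c:]"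
  by (rule poly_eqI) (simp add: coeff_truncate_fps coeff_pCons split: nat.split)

lemma fps_approx_const: "fps_approx n (\<lambda>_. c) (fps_const c)"
  by (simp add: fps_approx_def truncate_fps_Suc_const)

lemma fps_approx_X: "fps_approx n (\<lambda>v. v) fps_X"
proof (cases n)
  case 0
  have "(\<lambda>v::real. v) \<in> o[at_right 0](\<lambda>_. 1)"
    by (rule smalloI_tendsto) (auto intro: tendsto_ident_at)
  then show ?thesis using 0 by (simp add: fps_approx_def poly_truncate_fps_Suc)
next
  case (Suc m)
  have "truncate_fps (Suc n) (fps_X :: real fps) = [:0, 1:]"
    using Suc by (intro poly_eqI) (auto simp: coeff_truncate_fps coeff_pCons split: nat.split)
  then show ?thesis by (simp add: fps_approx_def)
qed

lemma fps_approx_add: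
  "fps_approx n f F \<Longrightarrow> fps_approx n g G \<Longrightarrow> fps_approx n (\<lambda>v. f v + g v) (F + G)"
  using sum_in_smallo(1) unfolding fps_approx_def by (fastforce simp: truncate_fps_add algebra_simps)

lemma fps_approx_diff:
  "fps_approx n f F \<Longrightarrow> fps_approx n g G \<Longrightarrow> fps_approx n (\<lambda>v. f v - g v) (F - G)"
  using sum_in_smallo(2) unfolding fps_approx_def by (fastforce simp: truncate_fps_diff algebra_simps)

lemma fps_approx_mult:
  assumes f: "fps_approx n f F" and g: "fps_approx n g G"
  shows "fps_approx n (\<lambda>v. f v * g v) (F * G)"
proof -
  define p q where "p = truncate_fps (Suc n) F" and "q = truncate_fps (Suc n) G"
  have "(\<lambda>v. (f v - poly p v) * g v) \<in> o[at_right 0](\<lambda>v. v ^ n)"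
    using landau_o.small_big_mult[OF f[unfolded fps_approx_def, folded p_def] fps_approx_bigo_1[OF g]]
    by simp
  moreover have "(\<lambda>v. (g v - poly q v) * poly p v) \<in> o[at_right 0](\<lambda>v. v ^ n)"
    using landau_o.small_big_mult[OF g[unfolded fps_approx_def, folded q_def]
        tendsto_imp_bigo_1[OF tendsto_poly[OF tendsto_ident_at, of p 0 "{0<..}"]]]
    by simp
  moreover have "(\<lambda>v. poly (p * q - truncate_fps (Suc n) (F * G)) v) \<in> o[at_right 0](\<lambda>v. v ^ n)"
  proof (rule poly_smallo_power_at_right_0)
    fix j assume "j \<le> n"
    then have "coeff (p * q) j = (F * G) $ j"
      by (auto simp: coeff_mult p_def q_def coeff_truncate_fps fps_mult_nth atLeast0AtMost intro!: sum.cong)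
    then show "coeff (p * q - truncate_fps (Suc n) (F * G)) j = 0"
      using \<open>j \<le> n\<close> by (simp add: coeff_truncate_fps)
  qed
  ultimately have "(\<lambda>v. (f v - poly p v) * g v + (g v - poly q v) * poly p v
      + poly (p * q - truncate_fps (Suc n) (F * G)) v) \<in> o[at_right 0](\<lambda>v. v ^ n)"
    by (intro sum_in_smallo)
  then show ?thesis
    by (simp add: fps_approx_def algebra_simps)
qed

lemma fps_approx_cmult:
  "fps_approx n f F \<Longrightarrow> fps_approx n (\<lambda>v. c * f v) (fps_const c * F)"
  using fps_approx_mult[OF fps_approx_const] by blast

lemma fps_approx_power:
  "fps_approx n f F \<Longrightarrow> fps_approx n (\<lambda>v. f v ^ k) (F ^ k)"
  by (induction k) (simp_all add: fps_approx_mult fps_approx_const[of n 1, simplified])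

lemma fps_approx_sum:
  "(\<And>k. k \<in> A \<Longrightarrow> fps_approx n (f k) (F k)) \<Longrightarrow> fps_approx n (\<lambda>v. \<Sum>k\<in>A. f k v) (\<Sum>k\<in>A. F k)"
proof (induction A rule: infinite_finite_induct)
  case (infinite A)
  then show ?case using fps_approx_const[of n 0] by simp
next
  case empty
  then show ?case using fps_approx_const[of n 0] by simp
next
  case (insert x A)
  then show ?case by (simp add: fps_approx_add)
qed

lemma fps_approx_inverse:
  assumes f: "fps_approx n f F" and F0: "F $ 0 \<noteq> 0"
  shows "fps_approx n (\<lambda>v. inverse (f v)) (inverse F)"
proof -
  define q where "q = truncate_fps (Suc n) (inverse F)"
  have "fps_approx n (\<lambda>v. f v * poly q v) (F * inverse F)"
    using f fps_approx_def q_def by (intro fps_approx_mult) simp_all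
  then have "fps_approx n (\<lambda>v. f v * poly q v) (fps_const 1)"
    using F0 by (simp add: inverse_mult_eq_1')
  then have "(\<lambda>v. f v * poly q v - 1) \<in> o[at_right 0](\<lambda>v. v ^ n)"
    by (simp add: fps_approx_def truncate_fps_Suc_const del: fps_const_1_eq_1)
  moreover have "(\<lambda>v. - inverse (f v)) \<in> O[at_right 0](\<lambda>_. 1)"
    using F0 fps_approx_tendsto[OF f] by (intro tendsto_imp_bigo_1) (auto intro!: tendsto_intros)
  ultimately have "(\<lambda>v. (f v * poly q v - 1) * - inverse (f v)) \<in> o[at_right 0](\<lambda>v. v ^ n)"
    using landau_o.small_big_mult by fastforce
  moreover have "eventually (\<lambda>v. (f v * poly q v - 1) * - inverse (f v) = inverse (f v) - poly q v) (at_right 0)"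
    using tendsto_imp_eventually_ne[OF fps_approx_tendsto[OF f] F0] by eventually_elim (simp add: field_simps)
  ultimately show ?thesis
    unfolding fps_approx_def q_def[symmetric] using landau_o.small.in_cong by fastforce
qed

lemma mean_self: "is_mean M \<Longrightarrow> s > 0 \<Longrightarrow> M s s = s"
  unfolding is_mean_def by (metis order_antisym max.idem min.idem)

lemma mean_in_interval:
  assumes "is_mean M" "0 < lo" "lo \<le> s" "s \<le> hi" "lo \<le> t" "t \<le> hi"
  shows "lo \<le> M s t \<and> M s t \<le> hi"
proof -
  have "min s t \<le> M s t \<and> M s t \<le> max s t"
    using assms unfolding is_mean_def by auto
  then show ?thesis using assms(3-) by linarith
qed

lemma eventually_mean_diagonal_bounds:
  assumes "is_mean M"
  shows "eventually (\<lambda>v. 1 - v \<le> M (1 - v) (1 + v) \<and> M (1 - v) (1 + v) \<le> 1 + v) (at_right 0)"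
  using eventually_at_right_0_less[OF zero_less_one]
  by eventually_elim (rule mean_in_interval[OF assms], simp_all)

lemma sum_atMost_double:
  "(\<Sum>j\<le>2 * (n :: nat). f j) = (\<Sum>k\<le>n. f (2 * k)) + (\<Sum>k<n. f (2 * k + 1))"
  by (induction n) (simp_all add: add_ac)

text \<open>With \<open>x = 1/v\<close>, homogeneity turns the expansion of \<open>M(x - 1, x + 1)\<close> at infinity into
  an expansion of \<open>M(1 - v, 1 + v)\<close> at \<open>0\<^sup>+\<close>.\<close>
lemma sym_expansion_at_right_0:
  assumes hom: "homogeneous_mean M" and exp: "has_sym_expansion M a"
  shows "(\<lambda>v. M (1 - v) (1 + v) - (\<Sum>k\<le>n. a k * v ^ (2 * k))) \<in> o[at_right 0](\<lambda>v. v ^ (2 * n))"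
proof -
  have powi: "v * inverse v powi (1 - 2 * int k) = v ^ (2 * k)" if "v > 0" for v :: real and k
  proof -
    have "inverse v powi (1 - 2 * int k) = v powi (2 * int k) / v"
      using that by (simp add: power_int_inverse power_int_minus[symmetric] power_int_diff)
    also have "v powi (2 * int k) = v ^ (2 * k)"
      by (metis of_nat_mult of_nat_numeral power_int_of_nat)
    finally show ?thesis using that by simp
  qed
  define f where "f x = M (x - 1) (x + 1) - (\<Sum>k\<le>n. a k * 1 ^ (2 * k) * x powi (1 - 2 * int k))" for x
  have "f \<in> o[at_top](\<lambda>x. x powi (1 - 2 * int n))"
    using exp unfolding has_sym_expansion_def f_def by blast
  then have "(\<lambda>v. v * f (inverse v)) \<in> o[at_right 0](\<lambda>v. v * inverse v powi (1 - 2 * int n))"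
    by (intro landau_o.small.mult_left landau_o.small.compose[OF _ filterlim_inverse_at_top_right])
  moreover have "eventually (\<lambda>v::real. v * inverse v powi (1 - 2 * int n) = v ^ (2 * n)) (at_right 0)"
    using eventually_at_right_0_less[OF zero_less_one] by eventually_elim (simp add: powi)
  moreover have "eventually (\<lambda>v. v * f (inverse v) = M (1 - v) (1 + v) - (\<Sum>k\<le>n. a k * v ^ (2 * k))) (at_right 0)"
    using eventually_at_right_0_less[OF zero_less_one]
  proof eventually_elim
    case (elim v)
    have "inverse v - 1 > 0" "inverse v + 1 > 0"
      using elim by (auto simp: field_simps)
    then have "M (v * (inverse v - 1)) (v * (inverse v + 1)) = v * M (inverse v - 1) (inverse v + 1)"
      using hom elim unfolding homogeneous_mean_def by blast
    moreover have "v * (inverse v - 1) = 1 - v" "v * (inverse v + 1) = 1 + v"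
      using elim by (auto simp: field_simps)
    moreover have "v * (\<Sum>k\<le>n. a k * 1 ^ (2 * k) * inverse v powi (1 - 2 * int k)) = (\<Sum>k\<le>n. a k * v ^ (2 * k))"
      unfolding sum_distrib_left by (intro sum.cong refl) (use powi elim in \<open>simp add: mult.left_commute\<close>)
    ultimately show ?case
      by (simp add: f_def right_diff_distrib)
  qed
  ultimately show ?thesis
    by (simp add: landau_o.small.in_cong landau_o.small.cong)
qed

lemma fps_approx_sym_expansion:
  assumes "homogeneous_mean M" "has_sym_expansion M a"
  shows "fps_approx (2 * n) (\<lambda>v. M (1 - v) (1 + v)) (Abs_fps a oo fps_X ^ 2)"
proof -
  have "poly (truncate_fps (Suc (2 * n)) (Abs_fps a oo fps_X ^ 2)) v = (\<Sum>k\<le>n. a k * v ^ (2 * k))" for v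
    by (simp add: poly_truncate_fps_Suc sum_atMost_double)
  then show ?thesis
    using sym_expansion_at_right_0[OF assms] by (simp add: fps_approx_def)
qed

lemma sym_expansion_coeff_0:
  assumes "is_mean M" "homogeneous_mean M" "has_sym_expansion M a"
  shows "a 0 = 1"
proof -
  have "eventually (\<lambda>v. 1 - v \<le> M (1 - v) (1 + v)) (at_right 0)"
    "eventually (\<lambda>v. M (1 - v) (1 + v) \<le> 1 + v) (at_right 0)"
    using eventually_mean_diagonal_bounds[OF assms(1)] by (simp_all add: eventually_conj_iff)
  moreover have "((\<lambda>v::real. 1 - v) \<longlongrightarrow> 1) (at_right 0)"
    "((\<lambda>v::real. 1 + v) \<longlongrightarrow> 1) (at_right 0)"
    by (auto intro!: tendsto_eq_intros)
  ultimately have "((\<lambda>v. M (1 - v) (1 + v)) \<longlongrightarrow> 1) (at_right 0)"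
    by (rule tendsto_sandwich)
  moreover have "((\<lambda>v. M (1 - v) (1 + v)) \<longlongrightarrow> a 0) (at_right 0)"
    using fps_approx_tendsto[OF fps_approx_sym_expansion[OF assms(2,3), of 0]] by simp
  ultimately show ?thesis
    using tendsto_unique trivial_limit_at_right_real by blast
qed

text \<open>Symmetry extends the one-sided expansion to a bound valid for small \<open>|w|\<close> of both signs.\<close>
lemma sym_expansion_uniform_bound:
  assumes "is_mean N" "symmetric_mean N" "homogeneous_mean N" "has_sym_expansion N a" "e > 0"
  obtains d where "d > 0"
    "\<And>w. \<bar>w\<bar> < d \<Longrightarrow> \<bar>N (1 - w) (1 + w) - (\<Sum>k\<le>n. a k * w ^ (2 * k))\<bar> \<le> e * \<bar>w\<bar> ^ (2 * n)"
proof -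
  have "eventually (\<lambda>v. \<bar>N (1 - v) (1 + v) - (\<Sum>k\<le>n. a k * v ^ (2 * k))\<bar> \<le> e * \<bar>v\<bar> ^ (2 * n)) (at_right 0)"
    using landau_o.smallD[OF sym_expansion_at_right_0[OF assms(3,4)] assms(5)] by (simp add: power_abs)
  then obtain d where "d > 0" and d:
    "\<And>v. 0 < v \<Longrightarrow> v < d \<Longrightarrow> \<bar>N (1 - v) (1 + v) - (\<Sum>k\<le>n. a k * v ^ (2 * k))\<bar> \<le> e * \<bar>v\<bar> ^ (2 * n)"
    unfolding eventually_at_right_field by auto
  have "\<bar>N (1 - w) (1 + w) - (\<Sum>k\<le>n. a k * w ^ (2 * k))\<bar> \<le> e * \<bar>w\<bar> ^ (2 * n)"
    if w: "\<bar>w\<bar> < min d 1" for w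
  proof (cases w "0 :: real" rule: linorder_cases)
    case less
    have "N (1 - w) (1 + w) = N (1 + w) (1 - w)"
      using assms(2) w unfolding symmetric_mean_def by (auto simp: abs_less_iff)
    also have "\<dots> = N (1 - - w) (1 + - w)"
      by simp
    finally have "N (1 - w) (1 + w) = N (1 - - w) (1 + - w)" .
    then show ?thesis
      using d[of "- w"] w less by (simp add: power_mult)
  next
    case equal
    then show ?thesis
      using mean_self[OF assms(1)] sym_expansion_coeff_0[OF assms(1,3,4)] assms(5)
      by (simp add: zero_power sum.atMost_shift)
  next
    case greater
    then show ?thesis using d w by simp
  qed
  then show ?thesis using that[of "min d 1"] \<open>d > 0\<close> by simp
qed

text \<open>Homogeneity reduces \<open>N(x, y)\<close> to \<open>c N(1 - w, 1 + w)\<close> with \<open>c = (x + y)/2\<close> and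
  \<open>w = (y - x)/(x + y) = O(v)\<close>.\<close>
lemma mean_expansion_near_diagonal:
  fixes N :: "real \<Rightarrow> real \<Rightarrow> real" and x y :: "real \<Rightarrow> real"
  assumes N: "is_mean N" "symmetric_mean N" "homogeneous_mean N" "has_sym_expansion N a"
    and xy: "eventually (\<lambda>v. 1 - v \<le> x v \<and> x v \<le> 1 + v \<and> 1 - v \<le> y v \<and> y v \<le> 1 + v) (at_right 0)"
  shows "(\<lambda>v. N (x v) (y v) - (\<Sum>k\<le>n. a k * (((y v - x v) / 2) ^ (2 * k) * ((x v + y v) / 2)
            * inverse ((x v + y v) / 2) ^ (2 * k)))) \<in> o[at_right 0](\<lambda>v. v ^ (2 * n))"
proof (rule landau_o.smallI)
  fix c :: real
  assume "c > 0"
  define e where "e = c / (2 * 4 ^ n)"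
  have "e > 0" using \<open>c > 0\<close> by (simp add: e_def)
  obtain d where "d > 0" and d:
    "\<And>w. \<bar>w\<bar> < d \<Longrightarrow> \<bar>N (1 - w) (1 + w) - (\<Sum>k\<le>n. a k * w ^ (2 * k))\<bar> \<le> e * \<bar>w\<bar> ^ (2 * n)"
    using sym_expansion_uniform_bound[OF N \<open>e > 0\<close>] by blast
  show "eventually (\<lambda>v. norm (N (x v) (y v) - (\<Sum>k\<le>n. a k * (((y v - x v) / 2) ^ (2 * k)
      * ((x v + y v) / 2) * inverse ((x v + y v) / 2) ^ (2 * k)))) \<le> c * norm (v ^ (2 * n))) (at_right 0)"
    using xy eventually_at_right_0_less[of "min (d / 2) (1 / 2)", simplified, OF \<open>d > 0\<close>]
  proof eventually_elim
    case (elim v)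
    define s w where "s = (x v + y v) / 2" and "w = (y v - x v) / (x v + y v)"
    have s: "1 / 2 \<le> s" "s \<le> 2"
      using elim by (auto simp: s_def)
    have "\<bar>y v - x v\<bar> * 1 \<le> \<bar>y v - x v\<bar> * (x v + y v)"
      using elim by (intro mult_left_mono) auto
    then have "\<bar>w\<bar> \<le> \<bar>y v - x v\<bar>"
      using elim by (simp add: w_def abs_divide divide_le_eq)
    then have w: "\<bar>w\<bar> \<le> 2 * v" "\<bar>w\<bar> < d" "\<bar>w\<bar> < 1"
      using elim by linarith+
    have "x v + y v > 0"
      using elim by linarith
    then have xy: "x v = s * (1 - w)" "y v = s * (1 + w)" "(y v - x v) / 2 = s * w"
      by (simp_all add: s_def w_def field_simps)
    have "N (s * (1 - w)) (s * (1 + w)) = s * N (1 - w) (1 + w)"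
      using N(3) s w(3) unfolding homogeneous_mean_def by (simp add: abs_less_iff)
    then have hom: "N (x v) (y v) = s * N (1 - w) (1 + w)"
      by (simp add: xy)
    have summand: "a k * ((s * w) ^ (2 * k) * s * inverse s ^ (2 * k)) = s * (a k * w ^ (2 * k))" for k
      using s by (simp add: power_mult_distrib power_inverse[symmetric] field_simps)
    have sum: "(\<Sum>k\<le>n. a k * (((y v - x v) / 2) ^ (2 * k) * ((x v + y v) / 2)
        * inverse ((x v + y v) / 2) ^ (2 * k))) = s * (\<Sum>k\<le>n. a k * w ^ (2 * k))"
      unfolding xy(3) s_def[symmetric] sum_distrib_left by (intro sum.cong refl summand)
    have "\<bar>N (x v) (y v) - s * (\<Sum>k\<le>n. a k * w ^ (2 * k))\<bar>
        = s * \<bar>N (1 - w) (1 + w) - (\<Sum>k\<le>n. a k * w ^ (2 * k))\<bar>"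
      using s by (simp add: hom abs_mult flip: right_diff_distrib)
    also have "\<dots> \<le> 2 * (e * \<bar>w\<bar> ^ (2 * n))"
      using d[OF w(2)] s by (intro mult_mono) auto
    also have "\<dots> \<le> 2 * (e * (2 * v) ^ (2 * n))"
      using w(1) \<open>e > 0\<close> by (intro mult_left_mono power_mono) auto
    also have "\<dots> = c * norm (v ^ (2 * n))"
      using elim by (simp add: e_def power_mult_distrib power_mult abs_mult)
    finally show ?case by (simp only: sum real_norm_def)
  qed
qed

text \<open>\<open>mean_fps a n H C\<close> is the formal counterpart of \<open>\<Sum>\<^sub>k a\<^sub>k h\<^sup>2\<^sup>k c\<^sup>1\<^sup>-\<^sup>2\<^sup>k\<close>, the expansion of
  \<open>N(c - h, c + h) = c N(1 - h/c, 1 + h/c)\<close>.\<close>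
definition mean_fps :: "(nat \<Rightarrow> real) \<Rightarrow> nat \<Rightarrow> real fps \<Rightarrow> real fps \<Rightarrow> real fps" where
  "mean_fps a n H C = (\<Sum>k\<le>n. fps_const (a k) * (H ^ (2 * k) * C * inverse C ^ (2 * k)))"

lemma fps_approx_mean:
  assumes N: "is_mean N" "symmetric_mean N" "homogeneous_mean N" "has_sym_expansion N a"
    and xy: "eventually (\<lambda>v. 1 - v \<le> x v \<and> x v \<le> 1 + v \<and> 1 - v \<le> y v \<and> y v \<le> 1 + v) (at_right 0)"
    and H: "fps_approx (2 * n) (\<lambda>v. (y v - x v) / 2) H"
    and C: "fps_approx (2 * n) (\<lambda>v. (x v + y v) / 2) C" "C $ 0 \<noteq> 0"
  shows "fps_approx (2 * n) (\<lambda>v. N (x v) (y v)) (mean_fps a n H C)"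
  unfolding mean_fps_def
  by (rule fps_approx_smallo_diff[OF _ mean_expansion_near_diagonal[OF N xy]])
     (intro fps_approx_sum fps_approx_cmult fps_approx_mult fps_approx_power fps_approx_inverse H C)

lemma mean_fps_cmult:
  assumes "c \<noteq> 0"
  shows "mean_fps a n (fps_const c * H) (fps_const c * C) = fps_const c * mean_fps a n H C"
proof -
  have summand: "(fps_const c * H) ^ (2 * k) * (fps_const c * C) * inverse (fps_const c * C) ^ (2 * k)
      = fps_const c * (H ^ (2 * k) * C * inverse C ^ (2 * k))" for k
    using assms by (simp add: power_mult_distrib fps_inverse_mult fps_const_inverse power_inverse field_simps)
  show ?thesis
    unfolding mean_fps_def sum_distrib_left by (intro sum.cong refl) (unfold summand, rule mult.left_commute)
qed

lemma mean_fps_uminus: "mean_fps a n (- H) C = mean_fps a n H C"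
  by (simp add: mean_fps_def power_mult)

lemma mean_fps_compose:
  assumes "G $ 0 = 0" "C $ 0 \<noteq> 0"
  shows "mean_fps a n H C oo G = mean_fps a n (H oo G) (C oo G)"
  using assms
  by (simp add: mean_fps_def fps_compose_sum_distrib fps_compose_mult_distrib fps_compose_power
      fps_inverse_compose[symmetric])

lemma mean_fps_X_mult_nth:
  "mean_fps a n (fps_X * H) C $ j
    = (\<Sum>k\<le>n. a k * (if j < 2 * k then 0 else (H ^ (2 * k) * (C * inverse C ^ (2 * k))) $ (j - 2 * k)))"
  unfolding mean_fps_def fps_sum_nth
  by (intro sum.cong refl) (simp add: power_mult_distrib mult.assoc fps_X_power_mult_nth)

lemma fps_X_mult_gseq:
  "a 0 = 1 \<Longrightarrow> fps_X * Abs_fps (gseq a) = (Abs_fps a oo fps_X ^ 2) - 1 + fps_X"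
  by (rule fps_ext) (auto simp: gseq_def elim!: oddE evenE)

lemma hseq_fps:
  "a 0 = 1 \<Longrightarrow> Abs_fps (hseq a) = 1 - fps_X + (Abs_fps a oo fps_X ^ 2)"
  by (rule fps_ext) (auto simp: hseq_def elim!: evenE)

lemma gseq_0 [simp]: "gseq a 0 = 1" and hseq_0 [simp]: "hseq a 0 = 2"
  by (simp_all add: gseq_def hseq_def)

text \<open>The expansion of \<open>N(1 - v, M(1 - v, 1 + v))\<close>: there the half-difference and the midpoint
  are \<open>X g(X)/2\<close> and \<open>h(X)/2\<close>.\<close>
definition inner_fps :: "(nat \<Rightarrow> real) \<Rightarrow> (nat \<Rightarrow> real) \<Rightarrow> nat \<Rightarrow> real fps" where
  "inner_fps aM aN m = fps_const (1/2) * mean_fps aN m (fps_X * Abs_fps (gseq aM)) (Abs_fps (hseq aM))"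

lemma inner_fps_nth:
  assumes "j \<le> 2 * m + 1"
  shows "inner_fps aM aN m $ j = (1/2) * (\<Sum>n=0..j div 2. aN n *
      (\<Sum>l=0..j-2*n. P l (2 * real n) (gseq aM) * P (j-2*n-l) (1 - 2 * real n) (hseq aM)))"
proof -
  have "inner_fps aM aN m $ j = (1/2) * (\<Sum>k\<le>m. aN k * (if j < 2 * k then 0 else
      (\<Sum>l=0..j-2*k. P l (2 * real k) (gseq aM) * P (j-2*k-l) (1 - 2 * real k) (hseq aM))))"
    by (simp add: inner_fps_def mean_fps_X_mult_nth P_convolution cong: if_cong)
  also have "\<dots> = (1/2) * (\<Sum>k=0..j div 2. aN k *
      (\<Sum>l=0..j-2*k. P l (2 * real k) (gseq aM) * P (j-2*k-l) (1 - 2 * real k) (hseq aM)))"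
    using assms by (intro arg_cong2[where f = "(*)"] sum.mono_neutral_cong_right) auto
  finally show ?thesis .
qed

lemma dseq_eq_inner_fps_nth: "i \<le> m \<Longrightarrow> dseq aM aN i = - inner_fps aM aN m $ (2 * i + 1)"
  by (simp add: inner_fps_nth dseq_def)

lemma sseq_eq_inner_fps_nth: "i \<le> m \<Longrightarrow> sseq aM aN i = inner_fps aM aN m $ (2 * i)"
  by (simp add: inner_fps_nth sseq_def)

lemma dseq_0: "aN 0 = 1 \<Longrightarrow> dseq aM aN 0 = 1/2"
  by (simp add: dseq_def hseq_def)

lemma sseq_0: "aN 0 = 1 \<Longrightarrow> sseq aM aN 0 = 1"
  by (simp add: sseq_def)

lemma mean_fps_outer_nth:
  assumes "d 0 > 0" "s 0 > 0"
  shows "mean_fps a m (fps_X * (Abs_fps d oo fps_X ^ 2)) (Abs_fps s oo fps_X ^ 2) $ (2 * m)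
    = (\<Sum>k\<le>m. a k * (\<Sum>l=0..m-k. P l (2 * real k) d * P (m-k-l) (1 - 2 * real k) s))"
proof -
  have "(Abs_fps d oo fps_X ^ 2) ^ (2 * k) * ((Abs_fps s oo fps_X ^ 2) * inverse (Abs_fps s oo fps_X ^ 2) ^ (2 * k))
      = (Abs_fps d ^ (2 * k) * (Abs_fps s * inverse (Abs_fps s) ^ (2 * k))) oo fps_X ^ 2" for k
    using assms by (simp add: fps_compose_mult_distrib fps_compose_power fps_inverse_compose[symmetric])
  then show ?thesis
    using assms by (simp add: mean_fps_X_mult_nth P_convolution flip: diff_mult_distrib2 cong: if_cong)
qed

lemma even_fps_compose_uminus_X: "(F oo fps_X ^ 2) oo - fps_X = (F oo fps_X ^ 2 :: real fps)"
  by (rule fps_ext) (simp add: neg_one_even_power)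

lemma inner_fps_odd_part:
  assumes "j \<le> 2 * m"
  shows "(fps_const (1/2) * ((inner_fps aM aN m oo - fps_X) - inner_fps aM aN m)) $ j
    = (fps_X * (Abs_fps (dseq aM aN) oo fps_X ^ 2)) $ j"
  using assms dseq_eq_inner_fps_nth[of "(j - 1) div 2" m aM aN]
  by (cases j) (auto elim!: evenE oddE simp: neg_one_odd_power)

lemma inner_fps_even_part:
  assumes "j \<le> 2 * m"
  shows "(fps_const (1/2) * (inner_fps aM aN m + (inner_fps aM aN m oo - fps_X))) $ j
    = (Abs_fps (sseq aM aN) oo fps_X ^ 2) $ j"
  using assms sseq_eq_inner_fps_nth[of "j div 2" m aM aN]
  by (auto elim!: evenE simp: neg_one_odd_power)

lemma fps_approx_inner_left:
  assumes M: "is_mean M" "homogeneous_mean M" "has_sym_expansion M aM"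
    and N: "is_mean N" "symmetric_mean N" "homogeneous_mean N" "has_sym_expansion N aN"
  shows "fps_approx (2 * m) (\<lambda>v. N (1 - v) (M (1 - v) (1 + v))) (inner_fps aM aN m)"
proof -
  note Mexp = fps_approx_sym_expansion[OF M(2,3), of m]
  note aM0 = sym_expansion_coeff_0[OF M]
  have "fps_approx (2 * m) (\<lambda>v. (M (1 - v) (1 + v) - (1 - v)) / 2)
      (fps_const (1/2) * (fps_X * Abs_fps (gseq aM)))"
    by (rule fps_approx_eqI[OF fps_approx_cmult[OF
          fps_approx_add[OF fps_approx_diff[OF Mexp fps_approx_const] fps_approx_X]], of "1/2" 1])
       (simp_all add: fps_X_mult_gseq[of aM, OF aM0])
  moreover have "fps_approx (2 * m) (\<lambda>v. ((1 - v) + M (1 - v) (1 + v)) / 2)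
      (fps_const (1/2) * Abs_fps (hseq aM))"
    by (rule fps_approx_eqI[OF fps_approx_cmult[OF
          fps_approx_add[OF fps_approx_diff[OF fps_approx_const fps_approx_X] Mexp]], of "1/2" 1])
       (simp_all add: hseq_fps[of aM, OF aM0])
  moreover have "eventually (\<lambda>v. 1 - v \<le> 1 - v \<and> 1 - v \<le> 1 + v
      \<and> 1 - v \<le> M (1 - v) (1 + v) \<and> M (1 - v) (1 + v) \<le> 1 + v) (at_right 0)"
    using eventually_mean_diagonal_bounds[OF M(1)] eventually_at_right_0_less[OF zero_less_one]
    by eventually_elim auto
  ultimately show ?thesis
    unfolding inner_fps_def by (auto simp flip: mean_fps_cmult intro!: fps_approx_mean[OF N])
qed

text \<open>By symmetry of \<open>N\<close> and evenness of the expansion of \<open>M\<close>, the outer point \<open>1 + v\<close> is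
  the reflection \<open>v \<mapsto> -v\<close> of the inner point \<open>1 - v\<close>.\<close>
lemma fps_approx_inner_right:
  assumes M: "is_mean M" "homogeneous_mean M" "has_sym_expansion M aM"
    and N: "is_mean N" "symmetric_mean N" "homogeneous_mean N" "has_sym_expansion N aN"
  shows "fps_approx (2 * m) (\<lambda>v. N (M (1 - v) (1 + v)) (1 + v)) (inner_fps aM aN m oo - fps_X)"
proof -
  note Mexp = fps_approx_sym_expansion[OF M(2,3), of m]
  note aM0 = sym_expansion_coeff_0[OF M]
  define G H where "G = fps_const (1/2) * (fps_X * Abs_fps (gseq aM))"
    and "H = fps_const (1/2) * Abs_fps (hseq aM)"
  have G: "G oo - fps_X = fps_const (1/2) * ((Abs_fps aM oo fps_X ^ 2) - 1 - fps_X)"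
    by (simp add: G_def fps_X_mult_gseq[of aM, OF aM0] fps_compose_add_distrib fps_compose_sub_distrib
        even_fps_compose_uminus_X flip: fps_const_mult_apply_left)
  have H: "H oo - fps_X = fps_const (1/2) * ((Abs_fps aM oo fps_X ^ 2) + 1 + fps_X)"
    by (simp add: H_def hseq_fps[of aM, OF aM0] fps_compose_add_distrib fps_compose_sub_distrib
        even_fps_compose_uminus_X flip: fps_const_mult_apply_left)
  have "fps_approx (2 * m) (\<lambda>v. ((1 + v) - M (1 - v) (1 + v)) / 2) (- (G oo - fps_X))"
    by (rule fps_approx_eqI[OF fps_approx_cmult[OF
          fps_approx_diff[OF fps_approx_add[OF fps_approx_const fps_approx_X] Mexp]], of "1/2" 1])
       (simp_all add: G algebra_simps)
  moreover have "fps_approx (2 * m) (\<lambda>v. (M (1 - v) (1 + v) + (1 + v)) / 2) (H oo - fps_X)"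
    by (rule fps_approx_eqI[OF fps_approx_cmult[OF
          fps_approx_add[OF Mexp fps_approx_add[OF fps_approx_const fps_approx_X]]], of "1/2" 1])
       (simp_all add: H algebra_simps)
  moreover have "eventually (\<lambda>v. 1 - v \<le> M (1 - v) (1 + v) \<and> M (1 - v) (1 + v) \<le> 1 + v
      \<and> 1 - v \<le> 1 + v \<and> 1 + v \<le> 1 + v) (at_right 0)"
    using eventually_mean_diagonal_bounds[OF M(1)] eventually_at_right_0_less[OF zero_less_one]
    by eventually_elim auto
  moreover have "(H oo - fps_X) $ 0 \<noteq> 0"
    by (simp add: H_def)
  moreover have "inner_fps aM aN m oo - fps_X = mean_fps aN m (- (G oo - fps_X)) (H oo - fps_X)"
    by (simp add: inner_fps_def G_def H_def mean_fps_cmult mean_fps_compose mean_fps_uminus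
        flip: fps_const_mult_apply_left)
  ultimately show ?thesis
    by (auto intro!: fps_approx_mean[OF N])
qed

lemma stabilized_coeff_identity:
  assumes M: "is_mean M" "homogeneous_mean M" "has_sym_expansion M aM"
    and N: "is_mean N" "symmetric_mean N" "homogeneous_mean N" "has_sym_expansion N aN"
    and K: "is_mean K" "symmetric_mean K" "homogeneous_mean K" "has_sym_expansion K aK"
    and stab: "\<forall>s>0. \<forall>t>0. M s t = K (N s (M s t)) (N (M s t) t)"
  shows "aM m = (\<Sum>k\<le>m. aK k * (\<Sum>l=0..m-k. P l (2 * real k) (dseq aM aN) *
                                          P (m-k-l) (1 - 2 * real k) (sseq aM aN)))"
proof -
  define mf A B where "mf v = M (1 - v) (1 + v)" and "A v = N (1 - v) (mf v)"
    and "B v = N (mf v) (1 + v)" for v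
  define I where "I = inner_fps aM aN m"
  have aN0: "aN 0 = 1"
    using sym_expansion_coeff_0 N by blast
  have ev: "eventually (\<lambda>v::real. 0 < v \<and> v < 1) (at_right 0)"
    by (rule eventually_at_right_0_less) simp
  have A: "fps_approx (2 * m) A I"
    unfolding A_def mf_def I_def by (rule fps_approx_inner_left[OF M N])
  have B: "fps_approx (2 * m) B (I oo - fps_X)"
    unfolding B_def mf_def I_def by (rule fps_approx_inner_right[OF M N])
  have "eventually (\<lambda>v. 1 - v \<le> A v \<and> A v \<le> 1 + v \<and> 1 - v \<le> B v \<and> B v \<le> 1 + v) (at_right 0)"
    using ev eventually_mean_diagonal_bounds[OF M(1)]
  proof eventually_elim
    case (elim v)
    then show ?case
      using mean_in_interval[OF N(1), of "1 - v" "1 - v" "1 + v" "mf v"]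
        mean_in_interval[OF N(1), of "1 - v" "mf v" "1 + v" "1 + v"]
      by (simp add: A_def B_def mf_def)
  qed
  moreover have "fps_approx (2 * m) (\<lambda>v. (B v - A v) / 2) (fps_X * (Abs_fps (dseq aM aN) oo fps_X ^ 2))"
  proof (rule fps_approx_cong[OF fps_approx_cmult[OF fps_approx_diff[OF B A], of "1/2"]])
    show "\<And>j. j \<le> 2 * m \<Longrightarrow> (fps_const (1/2) * ((I oo - fps_X) - I)) $ j
        = (fps_X * (Abs_fps (dseq aM aN) oo fps_X ^ 2)) $ j"
      unfolding I_def by (rule inner_fps_odd_part)
  qed simp
  moreover have "fps_approx (2 * m) (\<lambda>v. (A v + B v) / 2) (Abs_fps (sseq aM aN) oo fps_X ^ 2)"
  proof (rule fps_approx_cong[OF fps_approx_cmult[OF fps_approx_add[OF A B], of "1/2"]])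
    show "\<And>j. j \<le> 2 * m \<Longrightarrow> (fps_const (1/2) * (I + (I oo - fps_X))) $ j
        = (Abs_fps (sseq aM aN) oo fps_X ^ 2) $ j"
      unfolding I_def by (rule inner_fps_even_part)
  qed simp
  ultimately have "fps_approx (2 * m) (\<lambda>v. K (A v) (B v))
      (mean_fps aK m (fps_X * (Abs_fps (dseq aM aN) oo fps_X ^ 2)) (Abs_fps (sseq aM aN) oo fps_X ^ 2))"
    using sseq_0[of aN aM, OF aN0] by (intro fps_approx_mean[OF K]) simp_all
  moreover have "eventually (\<lambda>v. K (A v) (B v) = mf v) (at_right 0)"
    using ev by eventually_elim (simp add: A_def B_def mf_def stab[rule_format, symmetric])
  ultimately have "fps_approx (2 * m) mf
      (mean_fps aK m (fps_X * (Abs_fps (dseq aM aN) oo fps_X ^ 2)) (Abs_fps (sseq aM aN) oo fps_X ^ 2))"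
    by (rule fps_approx_cong) simp
  from fps_approx_unique[OF fps_approx_sym_expansion[OF M(2,3)] this[unfolded mf_def], of "2 * m"]
  show ?thesis
    by (simp add: mean_fps_outer_nth dseq_0[of aN aM, OF aN0] sseq_0[of aN aM, OF aN0])
qed

lemma P_exponent_0: "b 0 > 0 \<Longrightarrow> P n 0 b = (if n = 0 then 1 else 0)"
  using P_of_nat_power[of b n 0] by simp

lemma P_exponent_1: "b 0 > 0 \<Longrightarrow> P n 1 b = b n"
  using P_of_nat_power[of b n 1] by simp

lemma coeff_recursion_from_identity:
  assumes aN0: "aN 0 = 1" and aK0: "aK 0 = 1" and m: "m \<ge> 1"
    and identity: "aM m = (\<Sum>k\<le>m. aK k * (\<Sum>l=0..m-k. P l (2 * real k) (dseq aM aN) *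
                                                P (m-k-l) (1 - 2 * real k) (sseq aM aN)))"
  shows "aM m =
       (\<Sum>n=1..m. aN n * (\<Sum>k=0..2*m-2*n. P k (2 * real n) (gseq aM) *
                                          P (2*m-2*n-k) (1 - 2 * real n) (hseq aM)))
       + 2 * (\<Sum>n=1..m. aK n * (\<Sum>k=0..m-n. P k (2 * real n) (dseq aM aN) *
                                          P (m-n-k) (1 - 2 * real n) (sseq aM aN)))"
    (is "_ = ?U + 2 * ?T")
proof -
  have "sseq aM aN m = (hseq aM (2 * m) + ?U) / 2"
    by (simp add: sseq_def sum.atLeast_Suc_atMost[of 0 m] sum.atLeast_Suc_atMost[of 0 "2 * m"]
        P_exponent_0 P_exponent_1 aN0)
  moreover have "hseq aM (2 * m) = aM m"
    using m by (simp add: hseq_def)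
  moreover have "aM m = sseq aM aN m + ?T"
    using identity
    by (simp add: atMost_atLeast0 sum.atLeast_Suc_atMost[of 0 m] sum.atLeast_Suc_atMost[of 0 m]
        P_exponent_0 P_exponent_1 aK0 dseq_0[of aN aM, OF aN0] sseq_0[of aN aM, OF aN0])
  ultimately show ?thesis
    by (simp add: field_simps)
qed

theorem theorem3p6:
  fixes M N K :: "real \<Rightarrow> real \<Rightarrow> real" and aM aN aK :: "nat \<Rightarrow> real"
  assumes "is_mean M" "symmetric_mean M" "homogeneous_mean M"
    and "is_mean N" "symmetric_mean N" "homogeneous_mean N"
    and "is_mean K" "symmetric_mean K" "homogeneous_mean K"
    and "has_sym_expansion M aM" "has_sym_expansion N aN" "has_sym_expansion K aK"
    and "stable_mean K" "stable_mean N"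
    and "stabilized K N M"
  shows "aM 0 = 1 \<and>
    (\<forall>m\<ge>1. aM m =
       (\<Sum>n=1..m. aN n * (\<Sum>k=0..2*m-2*n. P k (2 * real n) (gseq aM) *
                                          P (2*m-2*n-k) (1 - 2 * real n) (hseq aM)))
       + 2 * (\<Sum>n=1..m. aK n * (\<Sum>k=0..m-n. P k (2 * real n) (dseq aM aN) *
                                          P (m-n-k) (1 - 2 * real n) (sseq aM aN)))) \<and>
    aM 1 = (aK 1 + aN 1) / 2"
proof -
  have stab: "\<forall>s>0. \<forall>t>0. M s t = K (N s (M s t)) (N (M s t) t)"
    using assms(15) unfolding stabilized_def by blast
  have aM0: "aM 0 = 1" and aN0: "aN 0 = 1" and aK0: "aK 0 = 1"
    using sym_expansion_coeff_0 assms(1,3,4,6,7,9-12) by blast+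
  note recursion = coeff_recursion_from_identity[OF aN0 aK0 _
      stabilized_coeff_identity[OF assms(1,3,10) assms(4-6,11) assms(7-9,12) stab]]
  have "aM 1 = (aK 1 + aN 1) / 2"
    using recursion[of 1] by (simp add: dseq_0 sseq_0 aN0 powr_minus_divide power2_eq_square)
  then show ?thesis
    using aM0 recursion by blast
qed

end
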